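(* Let $k \geq 1$ be a finite integer. The consensus number of the atomic $k$-sliding read/write register type is less than $k+1$; that is, there is no wait-free algorithm implementing consensus among $k+1$ crash-prone asynchronous processes that communicate through atomic read/write registers and any number of atomic $k$-sliding read/write registers.
   Context: System model: $n$ sequential asynchronous processes $p_1,\dots,p_n$ communicating through shared atomic objects; any number of processes may crash (halt prematurely, never recovering); implementations must be wait-free (every operation invoked by a non-crashed process terminates regardless of the behavior of the others). A consensus object provides a single operation $\mathrm{propose}(v)$, invoked at most once per process and returning a value, satisfying: Validity (a decided value was proposed by some process), Agreement (no two processes decide different values), Termination (every correct process that invokes $\mathrm{propose}()$ decides). The consensus number of an object type $T$ is the largest $n$ such that consensus can be wait-free implemented among $n$ processes using atomic read/write registers and objects of type $T$ ($+\infty$ if no such finite $n$ exists). An atomic $k$-sliding read/write register is a shared object whose state is a sequence of values (initially empty), with two atomic (linearizable) operations: $\mathrm{write}(v)$ appends $v$ to the end of the sequence, and $\mathrm{read}()$ returns the ordered sequence of the last $k$ values written before it in the linearization order, where if only $x<k$ values have been written the $k-x$ missing values are replaced by a default value $\bot$. *)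

theory Defs
  imports Main
begin

text \<open>
  Shared objects (indexed by an arbitrary type 'o, so any
  number of them) are either atomic read/write registers (with an initial value) or
  atomic k-sliding read/write registers.  Since objects are atomic, an execution is a
  sequence of atomic steps, determined by the inputs and a schedule (an infinite sequence
  of process identifiers).  A crashed process is one that is scheduled only finitely often.
\<close>

datatype objkind = RWReg | SlidingReg

datatype 'r oper = Read | Write 'r

datatype 'r resp = RegVal 'r | Window "'r option list" | Ack

datatype ('v, 'o, 'r) action = Decide 'v | Invoke 'o "'r oper"

record ('s, 'v, 'o, 'r) algorithm =
  init :: "nat \<Rightarrow> 'v \<Rightarrow> 's"
  act  :: "nat \<Rightarrow> 's \<Rightarrow> ('v, 'o, 'r) action"
  upd  :: "nat \<Rightarrow> 's \<Rightarrow> 'r resp \<Rightarrow> 's"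

text \<open>Value returned by a read of a k-sliding register whose write history (oldest first)
  is h: the last k written values, oldest first, missing values replaced by bottom (None).\<close>
definition window :: "nat \<Rightarrow> 'r list \<Rightarrow> 'r option list" where
  "window k h = replicate (k - length h) None @ map Some (drop (length h - k) h)"

record ('s, 'v, 'o, 'r) config =
  loc :: "nat \<Rightarrow> 's"
  mem :: "'o \<Rightarrow> 'r list"
  dec :: "nat \<Rightarrow> 'v option"

definition read_resp :: "nat \<Rightarrow> ('o \<Rightarrow> objkind) \<Rightarrow> ('o \<Rightarrow> 'r) \<Rightarrow> 'o \<Rightarrow> 'r list \<Rightarrow> 'r resp" where
  "read_resp k kind rinit ob h =
     (case kind ob of
        RWReg \<Rightarrow> RegVal (if h = [] then rinit ob else last h)
      | SlidingReg \<Rightarrow> Window (window k h))"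

text \<open>One atomic step of process p (a decided process has returned from propose and
  takes no further steps).\<close>
definition step :: "nat \<Rightarrow> ('o \<Rightarrow> objkind) \<Rightarrow> ('o \<Rightarrow> 'r) \<Rightarrow> ('s, 'v, 'o, 'r) algorithm
                     \<Rightarrow> nat \<Rightarrow> ('s, 'v, 'o, 'r) config \<Rightarrow> ('s, 'v, 'o, 'r) config" where
  "step k kind rinit A p c =
     (if dec c p \<noteq> None then c else
      (case act A p (loc c p) of
         Decide v \<Rightarrow> c\<lparr>dec := (dec c)(p := Some v)\<rparr>
       | Invoke ob Read \<Rightarrow>
           c\<lparr>loc := (loc c)(p := upd A p (loc c p) (read_resp k kind rinit ob (mem c ob)))\<rparr>
       | Invoke ob (Write r) \<Rightarrow>
           c\<lparr>loc := (loc c)(p := upd A p (loc c p) Ack),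
             mem := (mem c)(ob := mem c ob @ [r])\<rparr>))"

definition initial :: "('s, 'v, 'o, 'r) algorithm \<Rightarrow> (nat \<Rightarrow> 'v) \<Rightarrow> ('s, 'v, 'o, 'r) config" where
  "initial A x = \<lparr>loc = (\<lambda>p. init A p (x p)), mem = (\<lambda>_. []), dec = (\<lambda>_. None)\<rparr>"

primrec exec :: "nat \<Rightarrow> ('o \<Rightarrow> objkind) \<Rightarrow> ('o \<Rightarrow> 'r) \<Rightarrow> ('s, 'v, 'o, 'r) algorithm
                  \<Rightarrow> (nat \<Rightarrow> 'v) \<Rightarrow> (nat \<Rightarrow> nat) \<Rightarrow> nat \<Rightarrow> ('s, 'v, 'o, 'r) config" where
  "exec k kind rinit A x \<sigma> 0 = initial A x"
| "exec k kind rinit A x \<sigma> (Suc t) = step k kind rinit A (\<sigma> t) (exec k kind rinit A x \<sigma> t)"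

definition solves_consensus ::
  "nat \<Rightarrow> nat \<Rightarrow> ('o \<Rightarrow> objkind) \<Rightarrow> ('o \<Rightarrow> 'r) \<Rightarrow> ('s, 'v, 'o, 'r) algorithm \<Rightarrow> bool" where
  "solves_consensus k n kind rinit A \<longleftrightarrow>
     (\<forall>x \<sigma>. (\<forall>t. \<sigma> t < n) \<longrightarrow>
        (\<forall>t p v. p < n \<longrightarrow> dec (exec k kind rinit A x \<sigma> t) p = Some v \<longrightarrow> (\<exists>q<n. v = x q))
      \<and> (\<forall>t p q v w. p < n \<longrightarrow> q < n \<longrightarrow> dec (exec k kind rinit A x \<sigma> t) p = Some v
             \<longrightarrow> dec (exec k kind rinit A x \<sigma> t) q = Some w \<longrightarrow> v = w)
      \<and> (\<forall>p<n. (\<forall>T. \<exists>t\<ge>T. \<sigma> t = p) \<longrightarrow> (\<exists>t. dec (exec k kind rinit A x \<sigma> t) p \<noteq> None)))"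

end

theory Submission
  imports Defs
begin

text \<open>
  A valency argument in the style of Fischer, Lynch and Paterson.  Running each process solo
  from the input vector (a, b, ..., b) yields both decisions, so the initial configuration is
  bivalent.  Wait-freedom rules out an infinite schedule along which the configuration stays
  bivalent, so some reachable bivalent configuration c is critical: every single step leads to
  a univalent one.  Two processes p and q whose steps lead to different valences must both be
  about to write (a read or a decision is invisible to the other processes), to the same object
  (otherwise the steps commute), and that object must be a sliding register (a plain register
  write by p is overwritten by q).  Hence every process is about to write to this sliding
  register.  If p writes and then the n - 1 \<ge> k other processes write, p's value has left the
  window, so the result differs from the one where p does not write only in p's local state;
  a process other than p running solo then decides the same value from both, although they
  descend from configurations of different valence.
\<close>

lemma window_snoc:
  assumes "k \<ge> 1"
  shows "window k (h @ [v]) = tl (window k h) @ [Some v]"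
proof (cases "length h < k")
  case True
  then obtain d where d: "k - length h = Suc d" by (metis Suc_diff_Suc)
  then have "k - Suc (length h) = d" by simp
  with True d show ?thesis by (simp add: window_def)
next
  case False
  with assms have "Suc (length h) - k = Suc (length h - k)" by simp
  with False assms show ?thesis by (simp add: window_def drop_Suc tl_drop[symmetric] map_tl)
qed

lemma window_snoc_cong:
  assumes "window k h\<^sub>1 = window k h\<^sub>2"
  shows "window k (h\<^sub>1 @ [v]) = window k (h\<^sub>2 @ [v])"
proof (cases "k = 0")
  case True
  then show ?thesis by (simp add: window_def)
next
  case False
  with assms show ?thesis by (simp add: window_snoc)
qed

lemma window_append_long: "k \<le> length ws \<Longrightarrow> window k (h @ ws) = window k ws"
  by (simp add: window_def)

lemma read_resp_snoc_cong:
  "read_resp k kind rinit ob h\<^sub>1 = read_resp k kind rinit ob h\<^sub>2 \<Longrightarrow>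
   read_resp k kind rinit ob (h\<^sub>1 @ [v]) = read_resp k kind rinit ob (h\<^sub>2 @ [v])"
  by (auto simp: read_resp_def intro: window_snoc_cong split: objkind.splits)

lemma bounded_sequence_infinitely_often:
  fixes \<sigma> :: "nat \<Rightarrow> nat"
  assumes "\<And>t. \<sigma> t < n"
  shows "\<exists>p<n. \<forall>T. \<exists>t\<ge>T. \<sigma> t = p"
proof -
  have "finite (range \<sigma>)"
    using assms by (meson finite_lessThan finite_subset image_subsetI lessThan_iff)
  then obtain p where p: "p \<in> range \<sigma>" "infinite (\<sigma> -` {p})"
    using inf_img_fin_dom[of \<sigma> UNIV] by auto
  from p(2) have "\<forall>T. \<exists>t\<ge>T. \<sigma> t = p"
    unfolding finite_nat_set_iff_bounded by (auto simp: not_less)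
  with p(1) assms show ?thesis by auto
qed

lemma extendable_prefixes_infinite_sequence:
  assumes "P []" and "\<And>ps. P ps \<Longrightarrow> \<exists>p. P (ps @ [p])"
  shows "\<exists>\<sigma>. \<forall>t. P (map \<sigma> [0..<t])"
proof -
  obtain g where g: "\<And>ps. P ps \<Longrightarrow> P (ps @ [g ps])" using assms(2) by metis
  define pre where "pre = rec_nat [] (\<lambda>_ ps. ps @ [g ps])"
  have "pre t = map (\<lambda>i. g (pre i)) [0..<t] \<and> P (pre t)" for t
    by (induction t) (auto simp: pre_def assms(1) g)
  then show ?thesis by metis
qed

locale consensus_solution =
  fixes k :: nat and n :: nat and kind :: "'o \<Rightarrow> objkind" and rinit :: "'o \<Rightarrow> 'r"
    and A :: "('s, 'v, 'o, 'r) algorithm"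
  assumes two_le_n: "2 \<le> n"
    and window_lt_n: "k < n"
    and solves: "solves_consensus k n kind rinit A"
begin

abbreviation move :: "nat \<Rightarrow> ('s, 'v, 'o, 'r) config \<Rightarrow> ('s, 'v, 'o, 'r) config" where
  "move \<equiv> step k kind rinit A"

definition run :: "('s, 'v, 'o, 'r) config \<Rightarrow> nat list \<Rightarrow> ('s, 'v, 'o, 'r) config" where
  "run c ps = fold move ps c"

lemma run_Nil [simp]: "run c [] = c"
  and run_Cons [simp]: "run c (p # ps) = run (move p c) ps"
  and run_append [simp]: "run c (ps @ qs) = run (run c ps) qs"
  by (simp_all add: run_def)

lemma exec_eq_run: "exec k kind rinit A x \<sigma> t = run (initial A x) (map \<sigma> [0..<t])"
  by (induction t) auto

lemma move_decided: "dec c p \<noteq> None \<Longrightarrow> move p c = c"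
  by (simp add: step_def)

lemma move_Decide:
  "dec c p = None \<Longrightarrow> act A p (loc c p) = Decide v \<Longrightarrow> move p c = c\<lparr>dec := (dec c)(p := Some v)\<rparr>"
  by (simp add: step_def)

lemma move_Read:
  "dec c p = None \<Longrightarrow> act A p (loc c p) = Invoke ob Read \<Longrightarrow>
   move p c = c\<lparr>loc := (loc c)(p := upd A p (loc c p) (read_resp k kind rinit ob (mem c ob)))\<rparr>"
  by (simp add: step_def)

lemma move_Write:
  "dec c p = None \<Longrightarrow> act A p (loc c p) = Invoke ob (Write v) \<Longrightarrow>
   move p c = c\<lparr>loc := (loc c)(p := upd A p (loc c p) Ack), mem := (mem c)(ob := mem c ob @ [v])\<rparr>"
  by (simp add: step_def)

lemma move_other:
  "r \<noteq> p \<Longrightarrow> loc (move r c) p = loc c p \<and> dec (move r c) p = dec c p"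
  by (auto simp: step_def split: action.split oper.split)

lemma dec_move_persists: "dec c p = Some v \<Longrightarrow> dec (move r c) p = Some v"
  by (auto simp: step_def split: action.split oper.split)

lemma dec_run_persists: "dec c p = Some v \<Longrightarrow> dec (run c ps) p = Some v"
  by (induction ps arbitrary: c) (auto simp: dec_move_persists)

lemma dec_exec_persists:
  "dec (exec k kind rinit A x \<sigma> t) p = Some v \<Longrightarrow> dec (exec k kind rinit A x \<sigma> (t + d)) p = Some v"
  by (induction d) (auto simp: dec_move_persists)

lemma run_writes_same_object:
  assumes "distinct rs" and "\<And>r. r \<in> set rs \<Longrightarrow> dec c r = None \<and> act A r (loc c r) = Invoke ob (Write (wv r))"
  shows "run c rs = c\<lparr>loc := (\<lambda>r. if r \<in> set rs then upd A r (loc c r) Ack else loc c r),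
                      mem := (mem c)(ob := mem c ob @ map wv rs)\<rparr>"
  using assms
proof (induction rs arbitrary: c)
  case (Cons r rs)
  then have "move r c = c\<lparr>loc := (loc c)(r := upd A r (loc c r) Ack), mem := (mem c)(ob := mem c ob @ [wv r])\<rparr>"
    by (intro move_Write) auto
  moreover have "run (move r c) rs = (move r c)\<lparr>loc := (\<lambda>r'. if r' \<in> set rs then upd A r' (loc (move r c) r') Ack else loc (move r c) r'),
                 mem := (mem (move r c))(ob := mem (move r c) ob @ map wv rs)\<rparr>"
    using Cons calculation by (intro Cons.IH) auto
  ultimately show ?case using Cons.prems
    by (simp cong: if_cong) (rule arg_cong2[where f="\<lambda>a b. c\<lparr>loc := a, mem := b\<rparr>"]; auto simp: fun_eq_iff)
qed simp

definition reachable :: "('s, 'v, 'o, 'r) config \<Rightarrow> bool" where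
  "reachable c \<longleftrightarrow> (\<exists>x ps. set ps \<subseteq> {..<n} \<and> c = run (initial A x) ps)"

lemma reachable_initial: "reachable (initial A x)"
  unfolding reachable_def by (metis empty_subsetI list.set(1) run_Nil)

lemma reachable_run: "reachable c \<Longrightarrow> set qs \<subseteq> {..<n} \<Longrightarrow> reachable (run c qs)"
  unfolding reachable_def by (metis le_sup_iff run_append set_append)

lemma reachable_move: "reachable c \<Longrightarrow> p < n \<Longrightarrow> reachable (move p c)"
  using reachable_run[of c "[p]"] by simp

lemma exec_validity:
  assumes "\<forall>t. \<sigma> t < n" "p < n" "dec (exec k kind rinit A x \<sigma> t) p = Some v"
  shows "\<exists>q<n. v = x q"
  using spec[OF spec[OF solves[unfolded solves_consensus_def], of x], of \<sigma>] assms
  by blast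

lemma exec_agreement:
  assumes "\<forall>t. \<sigma> t < n" "p < n" "q < n"
    "dec (exec k kind rinit A x \<sigma> t) p = Some v" "dec (exec k kind rinit A x \<sigma> t) q = Some w"
  shows "v = w"
  using spec[OF spec[OF solves[unfolded solves_consensus_def], of x], of \<sigma>] assms
  by blast

lemma exec_termination:
  assumes "\<forall>t. \<sigma> t < n" "p < n" "\<forall>T. \<exists>t\<ge>T. \<sigma> t = p"
  shows "\<exists>t v. dec (exec k kind rinit A x \<sigma> t) p = Some v"
  using spec[OF spec[OF solves[unfolded solves_consensus_def], of x], of \<sigma>] assms
  by blast

text \<open>A finite prefix ps followed by d forever is a legal schedule, so the consensus properties
  transfer to reachable configurations.\<close>

lemma exec_prefix_schedule:
  assumes "set ps \<subseteq> {..<n}" "d < n"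
  obtains \<sigma> where "\<forall>t. \<sigma> t < n" "\<forall>T. \<exists>t\<ge>T. \<sigma> t = d"
    "\<And>m. exec k kind rinit A x \<sigma> (length ps + m) = run (initial A x) (ps @ replicate m d)"
proof
  let ?\<sigma> = "\<lambda>t. if t < length ps then ps ! t else d"
  show "\<forall>t. ?\<sigma> t < n" using assms by (auto dest!: nth_mem)
  show "\<forall>T. \<exists>t\<ge>T. ?\<sigma> t = d"
  proof
    fix T show "\<exists>t\<ge>T. ?\<sigma> t = d" by (rule exI[of _ "max T (length ps)"]) auto
  qed
  have "map ?\<sigma> [0..<length ps + m] = ps @ replicate m d" for m
    by (rule nth_equalityI) (auto simp: nth_append)
  then show "exec k kind rinit A x ?\<sigma> (length ps + m) = run (initial A x) (ps @ replicate m d)" for m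
    by (simp add: exec_eq_run)
qed

lemma reachable_validity:
  assumes "set ps \<subseteq> {..<n}" "p < n" "dec (run (initial A x) ps) p = Some v"
  shows "\<exists>q<n. v = x q"
proof -
  obtain \<sigma> where \<sigma>: "\<forall>t. \<sigma> t < n"
    "\<And>m. exec k kind rinit A x \<sigma> (length ps + m) = run (initial A x) (ps @ replicate m p)"
    using exec_prefix_schedule[OF assms(1,2)] by blast
  show ?thesis using exec_validity[OF \<sigma>(1) assms(2), of x "length ps"] \<sigma>(2)[of 0] assms(3) by simp
qed

lemma reachable_agreement:
  assumes "reachable c" "p < n" "q < n" "dec c p = Some v" "dec c q = Some w"
  shows "v = w"
proof -
  obtain x ps where c: "set ps \<subseteq> {..<n}" "c = run (initial A x) ps"
    using assms(1) reachable_def by auto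
  obtain \<sigma> where \<sigma>: "\<forall>t. \<sigma> t < n"
    "\<And>m. exec k kind rinit A x \<sigma> (length ps + m) = run (initial A x) (ps @ replicate m p)"
    using exec_prefix_schedule[OF c(1) assms(2)] by blast
  show ?thesis using exec_agreement[OF \<sigma>(1) assms(2,3), of x "length ps"] \<sigma>(2)[of 0] c(2) assms(4,5) by simp
qed

lemma reachable_solo_termination:
  assumes "reachable c" "p < n"
  shows "\<exists>m v. dec (run c (replicate m p)) p = Some v"
proof -
  obtain x ps where c: "set ps \<subseteq> {..<n}" "c = run (initial A x) ps"
    using assms(1) reachable_def by auto
  obtain \<sigma> where \<sigma>: "\<forall>t. \<sigma> t < n" "\<forall>T. \<exists>t\<ge>T. \<sigma> t = p"
    "\<And>m. exec k kind rinit A x \<sigma> (length ps + m) = run (initial A x) (ps @ replicate m p)"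
    using exec_prefix_schedule[OF c(1) assms(2)] by blast
  obtain t v where "dec (exec k kind rinit A x \<sigma> t) p = Some v"
    using exec_termination[OF \<sigma>(1) assms(2) \<sigma>(2)] by blast
  then have "dec (exec k kind rinit A x \<sigma> (t + length ps)) p = Some v"
    by (rule dec_exec_persists)
  then show ?thesis using \<sigma>(3)[of t] c(2) by (auto simp: add.commute)
qed

definition may_decide :: "('s, 'v, 'o, 'r) config \<Rightarrow> 'v \<Rightarrow> bool" where
  "may_decide c v \<longleftrightarrow> (\<exists>qs p. set qs \<subseteq> {..<n} \<and> p < n \<and> dec (run c qs) p = Some v)"

definition bivalent :: "('s, 'v, 'o, 'r) config \<Rightarrow> bool" where
  "bivalent c \<longleftrightarrow> (\<exists>v w. v \<noteq> w \<and> may_decide c v \<and> may_decide c w)"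

lemma may_decide_unique: "\<not> bivalent c \<Longrightarrow> may_decide c v \<Longrightarrow> may_decide c w \<Longrightarrow> v = w"
  unfolding bivalent_def by blast

lemma may_decide_run: "may_decide (run c qs) v \<Longrightarrow> set qs \<subseteq> {..<n} \<Longrightarrow> may_decide c v"
  unfolding may_decide_def by (metis le_sup_iff run_append set_append)

lemma may_decide_exists:
  assumes "reachable c"
  shows "\<exists>v. may_decide c v"
proof -
  have "0 < n" using two_le_n by simp
  with assms obtain m v where "dec (run c (replicate m 0)) 0 = Some v"
    using reachable_solo_termination by blast
  with \<open>0 < n\<close> show ?thesis unfolding may_decide_def
    by (intro exI[of _ v] exI[of _ "replicate m 0"] exI[of _ 0]) auto
qed

lemma bivalent_undecided:
  assumes "reachable c" "bivalent c" "p < n"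
  shows "dec c p = None"
proof (rule ccontr)
  assume "dec c p \<noteq> None"
  then obtain v where v: "dec c p = Some v" by auto
  have "w = v" if "may_decide c w" for w
    using that reachable_agreement[OF reachable_run[OF assms(1)] _ assms(3)] dec_run_persists[OF v]
    unfolding may_decide_def by metis
  with assms(2) show False unfolding bivalent_def by metis
qed

lemma bivalent_first_move:
  assumes "reachable c" "bivalent c" "may_decide c v"
  shows "\<exists>p<n. may_decide (move p c) v"
proof -
  obtain qs r where qs: "set qs \<subseteq> {..<n}" "r < n" "dec (run c qs) r = Some v"
    using assms(3) unfolding may_decide_def by auto
  with bivalent_undecided[OF assms(1,2)] obtain p qs' where "qs = p # qs'" by (cases qs) auto
  with qs show ?thesis unfolding may_decide_def by auto
qed

text \<open>Configurations that processes outside P cannot tell apart; the memory is compared only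
  through the responses reads would return.\<close>

definition indist :: "nat set \<Rightarrow> ('s, 'v, 'o, 'r) config \<Rightarrow> ('s, 'v, 'o, 'r) config \<Rightarrow> bool" where
  "indist P c\<^sub>1 c\<^sub>2 \<longleftrightarrow> (\<forall>r. r \<notin> P \<longrightarrow> loc c\<^sub>1 r = loc c\<^sub>2 r) \<and> dec c\<^sub>1 = dec c\<^sub>2 \<and>
     (\<forall>ob. read_resp k kind rinit ob (mem c\<^sub>1 ob) = read_resp k kind rinit ob (mem c\<^sub>2 ob))"

lemma indist_move:
  assumes "indist P c\<^sub>1 c\<^sub>2" "r \<notin> P"
  shows "indist P (move r c\<^sub>1) (move r c\<^sub>2)"
proof -
  have d: "dec c\<^sub>1 = dec c\<^sub>2" and l: "loc c\<^sub>1 r = loc c\<^sub>2 r"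
    and m: "\<And>ob. read_resp k kind rinit ob (mem c\<^sub>1 ob) = read_resp k kind rinit ob (mem c\<^sub>2 ob)"
    using assms unfolding indist_def by auto
  show ?thesis
  proof (cases "dec c\<^sub>1 r = None")
    case False
    with assms d show ?thesis by (simp add: move_decided)
  next
    case True
    show ?thesis
    proof (cases "act A r (loc c\<^sub>1 r)")
      case (Decide v)
      with True assms d l show ?thesis by (simp add: move_Decide indist_def)
    next
      case (Invoke ob op)
      with True assms d l m read_resp_snoc_cong[OF m] show ?thesis
        by (cases op) (simp_all add: move_Read move_Write indist_def)
    qed
  qed
qed

lemma indist_run: "indist P c\<^sub>1 c\<^sub>2 \<Longrightarrow> set rs \<inter> P = {} \<Longrightarrow> indist P (run c\<^sub>1 rs) (run c\<^sub>2 rs)"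
  by (induction rs arbitrary: c\<^sub>1 c\<^sub>2) (auto intro: indist_move)

lemma indist_common_decision:
  assumes "reachable c\<^sub>2" "indist P c\<^sub>1 c\<^sub>2" "r < n" "r \<notin> P"
  shows "\<exists>v. may_decide c\<^sub>1 v \<and> may_decide c\<^sub>2 v"
proof -
  obtain m v where v: "dec (run c\<^sub>2 (replicate m r)) r = Some v"
    using reachable_solo_termination[OF assms(1,3)] by blast
  have "indist P (run c\<^sub>1 (replicate m r)) (run c\<^sub>2 (replicate m r))"
    using assms(2,4) by (intro indist_run) auto
  with v have "dec (run c\<^sub>1 (replicate m r)) r = Some v" by (simp add: indist_def)
  with v assms(3) show ?thesis unfolding may_decide_def
    by (intro exI[of _ v] conjI exI[of _ "replicate m r"] exI[of _ r]) auto
qed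

lemma univalent_runs_distinguishable:
  assumes "reachable c\<^sub>2" "\<not> bivalent c\<^sub>1" "\<not> bivalent c\<^sub>2" "may_decide c\<^sub>1 a" "may_decide c\<^sub>2 b" "a \<noteq> b"
    "set qs\<^sub>1 \<subseteq> {..<n}" "set qs\<^sub>2 \<subseteq> {..<n}" "r < n" "r \<notin> P"
  shows "\<not> indist P (run c\<^sub>1 qs\<^sub>1) (run c\<^sub>2 qs\<^sub>2)"
proof
  assume "indist P (run c\<^sub>1 qs\<^sub>1) (run c\<^sub>2 qs\<^sub>2)"
  then obtain v where "may_decide (run c\<^sub>1 qs\<^sub>1) v" "may_decide (run c\<^sub>2 qs\<^sub>2) v"
    using indist_common_decision reachable_run assms(1,8,9,10) by blast
  with assms show False by (metis may_decide_run may_decide_unique)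
qed

lemma may_decide_initial_input:
  assumes "j < n"
  shows "may_decide (initial A x) (x j)"
proof -
  let ?y = "\<lambda>_. x j"
  obtain m d where d: "dec (run (initial A ?y) (replicate m j)) j = Some d"
    using reachable_solo_termination[OF reachable_initial assms] by blast
  have "set (replicate m j) \<subseteq> {..<n}" using assms by auto
  with d assms have "d = x j" using reachable_validity by blast
  have "indist {r. r \<noteq> j} (initial A x) (initial A ?y)"
    by (simp add: indist_def initial_def)
  then have "indist {r. r \<noteq> j} (run (initial A x) (replicate m j)) (run (initial A ?y) (replicate m j))"
    by (intro indist_run) auto
  with d have "dec (run (initial A x) (replicate m j)) j = Some (x j)"
    using \<open>d = x j\<close> by (simp add: indist_def)
  with assms show ?thesis unfolding may_decide_def
    by (intro exI[of _ "replicate m j"] exI[of _ j]) auto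
qed

lemma bivalent_initial:
  assumes "a \<noteq> b"
  shows "bivalent (initial A (\<lambda>i. if i = 0 then a else b))"
  using may_decide_initial_input[of 0] may_decide_initial_input[of 1] two_le_n assms
  unfolding bivalent_def by fastforce

definition critical :: "('s, 'v, 'o, 'r) config \<Rightarrow> bool" where
  "critical c \<longleftrightarrow> bivalent c \<and> (\<forall>p<n. \<not> bivalent (move p c))"

lemma critical_diverging_distinct:
  assumes "critical c" "p < n" "may_decide (move p c) a" "may_decide (move q c) b" "a \<noteq> b"
  shows "p \<noteq> q"
  using assms may_decide_unique unfolding critical_def by blast

lemma critical_successors_distinguishable:
  assumes "reachable c" "critical c" "p < n" "may_decide (move p c) a" "q < n" "may_decide (move q c) b"
    "a \<noteq> b" "set qs\<^sub>1 \<subseteq> {..<n}" "set qs\<^sub>2 \<subseteq> {..<n}"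
  shows "\<not> indist {p} (run (move p c) qs\<^sub>1) (run (move q c) qs\<^sub>2)"
proof -
  have "p \<noteq> q" using critical_diverging_distinct assms(2-7) by blast
  moreover have "\<not> bivalent (move p c)" "\<not> bivalent (move q c)"
    using assms(2,3,5) unfolding critical_def by auto
  ultimately show ?thesis
    using univalent_runs_distinguishable[OF reachable_move[OF assms(1,5)] _ _ assms(4,6,7,8,9,5)] by auto
qed

lemma critical_diverging_move_writes:
  assumes c: "reachable c" "critical c" and p: "p < n" "may_decide (move p c) a"
    and q: "q < n" "may_decide (move q c) b" and ab: "a \<noteq> b"
  shows "\<exists>ob v. act A p (loc c p) = Invoke ob (Write v)"
proof -
  have pq: "p \<noteq> q" using critical_diverging_distinct c(2) p q ab by blast
  have dp: "dec c p = None" using bivalent_undecided c p(1) unfolding critical_def by blast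
  have univ: "\<not> bivalent (move p c)" "\<not> bivalent (move q c)"
    using c(2) p(1) q(1) unfolding critical_def by auto
  show ?thesis
  proof (cases "act A p (loc c p)")
    case (Decide v)
    then have "may_decide (move p c) v"
      unfolding may_decide_def using p(1) dp move_Decide
      by (intro exI[of _ "[]"] exI[of _ p]) auto
    then have "v = a" using univ p(2) may_decide_unique by blast
    have "dec (move p (move q c)) p = Some v"
      using move_other[OF pq[symmetric], of c] dp Decide move_Decide by simp
    then have "may_decide (move q c) v"
      unfolding may_decide_def using p(1) by (intro exI[of _ "[p]"] exI[of _ p]) auto
    then have "v = b" using univ q(2) may_decide_unique by blast
    with \<open>v = a\<close> ab show ?thesis by simp
  next
    case (Invoke ob op)
    show ?thesis
    proof (cases op)
      case Read
      with Invoke dp have "indist {p} (move p c) c" by (simp add: move_Read indist_def)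
      then have "indist {p} (run (move p c) [q]) (run (move q c) [])"
        using pq by (simp add: indist_move)
      then show ?thesis using critical_successors_distinguishable[OF c p q ab, of "[q]" "[]"] q(1) by auto
    qed (use Invoke in auto)
  qed
qed

lemma critical_diverging_moves_write_sliding:
  assumes c: "reachable c" "critical c" and p: "p < n" "may_decide (move p c) a"
    and q: "q < n" "may_decide (move q c) b" and ab: "a \<noteq> b"
  shows "\<exists>ob vp vq. kind ob = SlidingReg \<and> act A p (loc c p) = Invoke ob (Write vp)
           \<and> act A q (loc c q) = Invoke ob (Write vq)"
proof -
  have pq: "p \<noteq> q" using critical_diverging_distinct c(2) p q ab by blast
  have dp: "dec c p = None" and dq: "dec c q = None"
    using bivalent_undecided c p(1) q(1) unfolding critical_def by blast+
  obtain ob vp where P: "act A p (loc c p) = Invoke ob (Write vp)"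
    using critical_diverging_move_writes[OF c p q ab] by blast
  obtain ob' vq where Q: "act A q (loc c q) = Invoke ob' (Write vq)"
    using critical_diverging_move_writes[OF c q p ab[symmetric]] by blast
  have mp: "move p c = c\<lparr>loc := (loc c)(p := upd A p (loc c p) Ack), mem := (mem c)(ob := mem c ob @ [vp])\<rparr>"
    using move_Write[OF dp P] .
  have mq: "move q c = c\<lparr>loc := (loc c)(q := upd A q (loc c q) Ack), mem := (mem c)(ob' := mem c ob' @ [vq])\<rparr>"
    using move_Write[OF dq Q] .
  have mqp: "move q (move p c) = (move p c)\<lparr>loc := (loc (move p c))(q := upd A q (loc c q) Ack),
       mem := (mem (move p c))(ob' := mem (move p c) ob' @ [vq])\<rparr>"
    using move_Write[of "move p c" q ob' vq] mp dq Q pq by simp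
  have mpq: "move p (move q c) = (move q c)\<lparr>loc := (loc (move q c))(p := upd A p (loc c p) Ack),
       mem := (mem (move q c))(ob := mem (move q c) ob @ [vp])\<rparr>"
    using move_Write[of "move q c" p ob vp] mq dp P pq by simp
  have distinguishable: "\<not> indist {p} (run (move p c) [q]) (run (move q c) qs)"
    if "set qs \<subseteq> {..<n}" for qs
    using critical_successors_distinguishable[OF c p q ab, of "[q]" qs] q(1) that by simp
  have "ob = ob'"
  proof (rule ccontr)
    assume "ob \<noteq> ob'"
    then have "move q (move p c) = move p (move q c)"
      using mqp mpq mp mq pq by (auto simp: fun_upd_twist)
    then show False using distinguishable[of "[p]"] p(1) by (simp add: indist_def)
  qed
  moreover have "kind ob \<noteq> RWReg"
  proof
    assume "kind ob = RWReg"
    then have "indist {p} (move q (move p c)) (move q c)"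
      using mqp mq mp \<open>ob = ob'\<close> by (auto simp: indist_def read_resp_def)
    then show False using distinguishable[of "[]"] by simp
  qed
  ultimately show ?thesis using P Q by (metis objkind.exhaust)
qed

lemma critical_all_write_sliding:
  assumes c: "reachable c" "critical c"
  obtains ob p a q b where "kind ob = SlidingReg" "p < n" "may_decide (move p c) a"
    "q < n" "may_decide (move q c) b" "a \<noteq> b"
    "\<And>r. r < n \<Longrightarrow> \<exists>v. act A r (loc c r) = Invoke ob (Write v)"
proof -
  obtain a b where ab: "a \<noteq> b" "may_decide c a" "may_decide c b"
    using c(2) unfolding critical_def bivalent_def by auto
  obtain p where p: "p < n" "may_decide (move p c) a"
    using bivalent_first_move[OF c(1) _ ab(2)] c(2) unfolding critical_def by auto
  obtain q where q: "q < n" "may_decide (move q c) b"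
    using bivalent_first_move[OF c(1) _ ab(3)] c(2) unfolding critical_def by auto
  obtain ob vp vq where ob: "kind ob = SlidingReg" "act A p (loc c p) = Invoke ob (Write vp)"
    "act A q (loc c q) = Invoke ob (Write vq)"
    using critical_diverging_moves_write_sliding[OF c p q ab(1)] by blast
  have "\<exists>v. act A r (loc c r) = Invoke ob (Write v)" if r: "r < n" for r
  proof -
    text \<open>The valence d of move r c differs from a or from b, so r pairs with p or with q.\<close>
    obtain d where d: "may_decide (move r c) d" using may_decide_exists reachable_move[OF c(1) r] by blast
    show ?thesis
    proof (cases "d = a")
      case False
      then show ?thesis
        using critical_diverging_moves_write_sliding[OF c p r d] ob(2) by (metis action.inject(2))
    next
      case True
      then show ?thesis
        using critical_diverging_moves_write_sliding[OF c q r d] ob(3) ab(1) by (metis action.inject(2))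
    qed
  qed
  with ob(1) p q ab(1) show ?thesis using that by blast
qed

lemma no_critical_configuration:
  assumes c: "reachable c" "critical c"
  shows False
proof -
  obtain ob p a q b where ob: "kind ob = SlidingReg" and p: "p < n" "may_decide (move p c) a"
    and q: "q < n" "may_decide (move q c) b" and ab: "a \<noteq> b"
    and writes: "\<And>r. r < n \<Longrightarrow> \<exists>v. act A r (loc c r) = Invoke ob (Write v)"
    using critical_all_write_sliding[OF c] by blast
  have pq: "p \<noteq> q" using critical_diverging_distinct c(2) p q ab by blast
  define wv where "wv r = (SOME v. act A r (loc c r) = Invoke ob (Write v))" for r
  have wv: "act A r (loc c r) = Invoke ob (Write (wv r))" if "r < n" for r
    unfolding wv_def using someI_ex[OF writes[OF that]] .
  have dec_c: "dec c r = None" if "r < n" for r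
    using bivalent_undecided c that unfolding critical_def by blast
  text \<open>Let q and then every other process except p write: n - 1 \<ge> k writes.\<close>
  define rs' where "rs' = filter (\<lambda>r. r \<noteq> p \<and> r \<noteq> q) [0..<n]"
  define rs where "rs = q # rs'"
  have rs: "distinct rs" "set rs = {..<n} - {p}"
    unfolding rs_def rs'_def using q(1) pq by auto
  then have "k \<le> length rs"
    using distinct_card[OF rs(1)] p(1) window_lt_n by simp
  have mp: "move p c = c\<lparr>loc := (loc c)(p := upd A p (loc c p) Ack), mem := (mem c)(ob := mem c ob @ [wv p])\<rparr>"
    using move_Write[OF dec_c[OF p(1)] wv[OF p(1)]] .
  have run_c: "run c rs = c\<lparr>loc := (\<lambda>r. if r \<in> set rs then upd A r (loc c r) Ack else loc c r),
                 mem := (mem c)(ob := mem c ob @ map wv rs)\<rparr>"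
    by (rule run_writes_same_object) (use rs dec_c wv in auto)
  have run_mp: "run (move p c) rs = (move p c)\<lparr>loc := (\<lambda>r. if r \<in> set rs then upd A r (loc (move p c) r) Ack else loc (move p c) r),
                 mem := (mem (move p c))(ob := mem (move p c) ob @ map wv rs)\<rparr>"
    by (rule run_writes_same_object) (use rs dec_c wv mp in auto)
  have "window k ((mem c ob @ [wv p]) @ map wv rs) = window k (mem c ob @ map wv rs)"
    using \<open>k \<le> length rs\<close> by (simp only: window_append_long length_map)
  then have "indist {p} (run (move p c) rs) (run c rs)"
    using run_c run_mp mp ob by (auto simp: indist_def read_resp_def)
  then have "indist {p} (run (move p c) rs) (run (move q c) rs')"
    unfolding rs_def by simp
  moreover have "set rs' \<subseteq> {..<n}" unfolding rs'_def by auto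
  ultimately show False
    using critical_successors_distinguishable[OF c p q ab, of rs rs'] rs(2) by auto
qed

lemma bivalent_successor:
  assumes "reachable c" "bivalent c"
  shows "\<exists>p<n. bivalent (move p c)"
  using no_critical_configuration[OF assms(1)] assms(2) unfolding critical_def by blast

theorem consensus_impossible:
  fixes a b :: 'v
  assumes "a \<noteq> b"
  shows False
proof -
  let ?x = "\<lambda>i. if i = 0 then a else b"
  let ?P = "\<lambda>ps. set ps \<subseteq> {..<n} \<and> bivalent (run (initial A ?x) ps)"
  have "?P []" using bivalent_initial[OF assms] by simp
  moreover have "\<exists>p. ?P (ps @ [p])" if "?P ps" for ps
    using bivalent_successor[OF reachable_run[OF reachable_initial]] that by fastforce
  ultimately obtain \<sigma> where \<sigma>: "\<And>t. ?P (map \<sigma> [0..<t])"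
    using extendable_prefixes_infinite_sequence[of ?P] by blast
  have "\<sigma> t < n" for t using \<sigma>[of "Suc t"] by simp
  then obtain p where p: "p < n" "\<forall>T. \<exists>t\<ge>T. \<sigma> t = p"
    using bounded_sequence_infinitely_often by blast
  then obtain t v where "dec (exec k kind rinit A ?x \<sigma> t) p = Some v"
    using exec_termination \<open>\<And>t. \<sigma> t < n\<close> by blast
  moreover have "dec (exec k kind rinit A ?x \<sigma> t) p = None"
    using bivalent_undecided[OF reachable_run[OF reachable_initial] _ p(1)] \<sigma>[of t]
    by (simp add: exec_eq_run)
  ultimately show False by simp
qed

end

theorem theorem2:
  fixes k :: nat
    and kind :: "'o \<Rightarrow> objkind"
    and rinit :: "'o \<Rightarrow> 'r"
    and A :: "('s, 'v, 'o, 'r) algorithm"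
  assumes "k \<ge> 1"
    and "\<exists>a b :: 'v. a \<noteq> b"
  shows "\<not> solves_consensus k (k + 1) kind rinit A"
proof
  assume "solves_consensus k (k + 1) kind rinit A"
  then interpret consensus_solution k "k + 1" kind rinit A
    using assms(1) by unfold_locales auto
  from assms(2) show False using consensus_impossible by blast
qed

end
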